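(* Let $f:\mathbb{R}\to\mathbb{C}$ be a Lebesgue measurable function which is not zero almost everywhere and which has faster than exponential decay, i.e. $\lim_{x\to\infty}|f(x)|e^{cx}=0$ for every $c>0$. Then for every $b>0$, $\mathcal G(f,\mathbb{R}\times b\mathbb{Z})$ is linearly independent.
   Context: For $a,t\in\mathbb{R}$, $M_aT_tf(x)=e^{2\pi i a x}f(x-t)$, and $\mathcal G(f,\mathbb{R}\times b\mathbb{Z})=\{M_aT_tf: a\in\mathbb{R},\ t\in b\mathbb{Z}\}$. Measurable functions equal a.e. are identified; this system is linearly independent if every finite linear combination of its elements over distinct pairs $(a,t)$ with coefficients not all zero is not zero almost everywhere. *)

theory Defs
  imports "HOL-Analysis.Analysis"
begin

definition MT :: "real \<Rightarrow> real \<Rightarrow> (real \<Rightarrow> complex) \<Rightarrow> real \<Rightarrow> complex" where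
  "MT a t f x = exp (2 * complex_of_real pi * \<i> * complex_of_real a * complex_of_real x) * f (x - t)"

definition gabor_lin_indep :: "(real \<Rightarrow> complex) \<Rightarrow> real \<Rightarrow> bool" where
  "gabor_lin_indep f b \<longleftrightarrow>
     (\<forall>S (c :: real \<times> real \<Rightarrow> complex).
        finite S \<and> S \<subseteq> UNIV \<times> {t. \<exists>k::int. t = b * of_int k} \<and> (\<exists>p\<in>S. c p \<noteq> 0) \<longrightarrow>
        \<not> (AE x in lebesgue. (\<Sum>p\<in>S. c p * MT (fst p) (snd p) f x) = 0))"

end

theory Submission
  imports Defs "HOL-Computational_Algebra.Polynomial"
begin

text \<open>
  Suppose a finite combination with time shifts in b\<int> vanishes almost everywhere, and let t be the
  largest shift carrying a nonzero coefficient. Evaluating at z + t isolates the terms with shift t: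
  Q(z) f(z) is a combination of the values f(z + k b), 1 \<le> k \<le> K, where Q is an exponential sum
  with distinct frequencies and a nonzero coefficient. Iterating along z + n b bounds |f(z)| by the
  product of the factors max 1 (C / |Q(z + j b)|), j < N, times values of f beyond z + N b, which
  decay faster than any exponential. At every point some derivative of Q of order at most D is
  bounded below, so by a van der Corput type estimate the set where |Q| < \<delta> has measure
  O(\<delta>^(1/D)) in every window of fixed length; hence ln (1 / |Q|) is integrable over such windows,
  uniformly under translation. Markov's inequality then bounds the product by e^(L N) outside a set
  of measure O(1/L), and letting N and then L grow shows that f vanishes almost everywhere.
\<close>

section \<open>Sublevel sets of functions with a large derivative\<close>

lemma MVT_abs:
  fixes g g' :: "real \<Rightarrow> real"
  assumes "\<And>x. (g has_real_derivative g' x) (at x)"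
  shows "\<exists>z \<in> closed_segment u v. \<bar>g v - g u\<bar> = \<bar>g' z\<bar> * \<bar>v - u\<bar>"
proof (cases u v rule: linorder_cases)
  case less
  then obtain z where "u < z" "z < v" "g v - g u = (v - u) * g' z"
    using MVT2[of u v g g'] assms by blast
  with less show ?thesis
    by (intro bexI[of _ z]) (auto simp: abs_mult closed_segment_eq_real_ivl)
next
  case greater
  then obtain z where "v < z" "z < u" "g u - g v = (u - v) * g' z"
    using MVT2[of v u g g'] assms by blast
  with greater show ?thesis
    by (intro bexI[of _ z]) (auto simp: abs_mult closed_segment_eq_real_ivl abs_minus_commute)
qed simp

lemma abs_diff_ge_of_deriv_ge:
  fixes g g' :: "real \<Rightarrow> real"
  assumes "\<And>x. (g has_real_derivative g' x) (at x)"
    and "\<forall>x\<in>{a..b}. \<eta> \<le> \<bar>g' x\<bar>" and "u \<in> {a..b}" "v \<in> {a..b}"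
  shows "\<eta> * \<bar>v - u\<bar> \<le> \<bar>g v - g u\<bar>"
proof -
  obtain z where z: "z \<in> closed_segment u v" "\<bar>g v - g u\<bar> = \<bar>g' z\<bar> * \<bar>v - u\<bar>"
    using MVT_abs[OF assms(1)] by blast
  have "z \<in> {a..b}"
    using z(1) assms(3,4) by (auto simp: closed_segment_eq_real_ivl split: if_splits)
  with assms(2) z(2) show ?thesis
    by (simp add: mult_right_mono)
qed

lemma abs_diff_le_of_deriv_le:
  fixes g g' :: "real \<Rightarrow> real"
  assumes "\<And>x. (g has_real_derivative g' x) (at x)" and "\<And>x. \<bar>g' x\<bar> \<le> B"
  shows "\<bar>g v - g u\<bar> \<le> B * \<bar>v - u\<bar>"
  using MVT_abs[OF assms(1), of u v] assms(2) by (metis abs_ge_zero mult_right_mono)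

lemma sublevel_subset_interval:
  fixes g g' :: "real \<Rightarrow> real"
  assumes "\<And>x. (g has_real_derivative g' x) (at x)"
    and "\<eta> > 0" and "\<forall>x\<in>{a..b}. \<eta> \<le> \<bar>g' x\<bar>"
  shows "\<exists>x0. {x\<in>{a..b}. \<bar>g x\<bar> < \<delta>} \<subseteq> {x0 - 2*\<delta>/\<eta> .. x0 + 2*\<delta>/\<eta>}"
proof (cases "{x\<in>{a..b}. \<bar>g x\<bar> < \<delta>} = {}")
  case False
  then obtain x0 where x0: "x0 \<in> {a..b}" "\<bar>g x0\<bar> < \<delta>" by auto
  have "\<bar>x - x0\<bar> \<le> 2*\<delta>/\<eta>" if "x \<in> {a..b}" "\<bar>g x\<bar> < \<delta>" for x
  proof -
    have "\<eta> * \<bar>x - x0\<bar> \<le> 2*\<delta>"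
      using abs_diff_ge_of_deriv_ge[OF assms(1,3) x0(1) that(1)] that(2) x0(2) by linarith
    with assms(2) show ?thesis by (simp add: field_simps)
  qed
  then show ?thesis by (intro exI[of _ x0] subsetI) (fastforce simp: abs_le_iff)
qed auto

lemma sets_lborel_sublevel:
  fixes h :: "real \<Rightarrow> real"
  assumes "continuous_on UNIV h"
  shows "{x\<in>{a..b}. h x < \<delta>} \<in> sets lborel"
proof -
  have [measurable]: "h \<in> borel_measurable borel"
    using assms by (intro borel_measurable_continuous_onI) auto
  show ?thesis by measurable
qed

lemma emeasure_sublevel_split:
  fixes h :: "real \<Rightarrow> real"
  assumes "continuous_on UNIV h" and "r \<ge> 0"
  shows "emeasure lborel {x\<in>{a..b}. h x < \<delta>}
           \<le> emeasure lborel {x\<in>{a..min b (x0 - r)}. h x < \<delta>} + ennreal (2 * r)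
             + emeasure lborel {x\<in>{max a (x0 + r)..b}. h x < \<delta>}"
proof -
  let ?U1 = "{x\<in>{a..min b (x0 - r)}. h x < \<delta>}" and ?U2 = "{x\<in>{max a (x0 + r)..b}. h x < \<delta>}"
  have sets: "?U1 \<in> sets lborel" "{x0 - r .. x0 + r} \<in> sets lborel" "?U2 \<in> sets lborel"
    by (rule sets_lborel_sublevel[OF assms(1)] | simp)+
  have "{x\<in>{a..b}. h x < \<delta>} \<subseteq> ?U1 \<union> {x0 - r .. x0 + r} \<union> ?U2"
    by auto
  then have "emeasure lborel {x\<in>{a..b}. h x < \<delta>} \<le> emeasure lborel (?U1 \<union> {x0 - r .. x0 + r} \<union> ?U2)"
    by (rule emeasure_mono) (intro sets.Un sets)
  also have "\<dots> \<le> emeasure lborel (?U1 \<union> {x0 - r .. x0 + r}) + emeasure lborel ?U2"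
    by (intro emeasure_subadditive sets.Un sets)
  also have "\<dots> \<le> emeasure lborel ?U1 + emeasure lborel {x0 - r .. x0 + r} + emeasure lborel ?U2"
    by (intro add_right_mono emeasure_subadditive sets)
  also have "emeasure lborel {x0 - r .. x0 + r} = ennreal (2 * r)"
    using \<open>r \<ge> 0\<close> by simp
  finally show ?thesis .
qed

lemma sublevel_measure_le_step:
  fixes u v v' :: "real \<Rightarrow> real" and n :: nat
  assumes "continuous_on UNIV u" and "\<And>x. (v has_real_derivative v' x) (at x)"
    and IH: "\<And>a b \<eta>. \<eta> > 0 \<Longrightarrow> \<forall>x\<in>{a..b}. \<eta> \<le> \<bar>v x\<bar> \<Longrightarrow>
               emeasure lborel {x\<in>{a..b}. \<bar>u x\<bar> < \<delta>} \<le> ennreal (c * (\<delta>/\<eta>) powr (1 / n))"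
    and "c \<ge> 0" and "n > 0" and "\<eta> > 0" and "\<delta> > 0" and "\<forall>x\<in>{a..b}. \<eta> \<le> \<bar>v' x\<bar>"
  shows "emeasure lborel {x\<in>{a..b}. \<bar>u x\<bar> < \<delta>} \<le> ennreal ((2 * c + 8) * (\<delta>/\<eta>) powr (1 / Suc n))"
proof -
  define t where "t = (\<delta>/\<eta>) powr (1 / Suc n)"
  define \<alpha> where "\<alpha> = \<eta> * t"
  have "t > 0" and "\<alpha> > 0"
    using \<open>\<eta> > 0\<close> \<open>\<delta> > 0\<close> by (simp_all add: t_def \<alpha>_def)
  have "t ^ Suc n = \<delta>/\<eta>"
    using \<open>\<eta> > 0\<close> \<open>\<delta> > 0\<close> unfolding t_def by (subst powr_power) (simp_all del: of_nat_Suc)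
  then have "\<delta>/\<alpha> = t ^ n"
    using \<open>t > 0\<close> \<open>\<eta> > 0\<close> by (simp add: \<alpha>_def field_simps)
  then have \<delta>\<alpha>: "(\<delta>/\<alpha>) powr (1 / n) = t"
    using \<open>t > 0\<close> \<open>n > 0\<close> by (simp only: powr_realpow[symmetric] powr_powr) simp
  obtain x0 where x0: "{x\<in>{a..b}. \<bar>v x\<bar> < \<alpha>} \<subseteq> {x0 - 2*t .. x0 + 2*t}"
    using sublevel_subset_interval[OF assms(2) \<open>\<eta> > 0\<close> assms(8), of \<alpha>] \<open>\<eta> > 0\<close> by (auto simp: \<alpha>_def)
  \<comment> \<open>Off the interval of radius 4t around x0 the induction hypothesis applies with \<alpha> for \<eta>.\<close>
  have far: "\<alpha> \<le> \<bar>v x\<bar>" if "x \<in> {a..b}" "4*t \<le> \<bar>x - x0\<bar>" for x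
    using that x0 \<open>t > 0\<close> by (force simp: abs_le_iff)
  have "emeasure lborel {x\<in>{a..b}. \<bar>u x\<bar> < \<delta>}
      \<le> emeasure lborel {x\<in>{a..min b (x0 - 4*t)}. \<bar>u x\<bar> < \<delta>} + ennreal (2 * (4*t))
        + emeasure lborel {x\<in>{max a (x0 + 4*t)..b}. \<bar>u x\<bar> < \<delta>}"
    using assms(1) \<open>t > 0\<close> by (intro emeasure_sublevel_split continuous_on_rabs) auto
  also have "\<dots> \<le> ennreal (c * t) + ennreal (8*t) + ennreal (c * t)"
  proof (intro add_mono)
    have "\<forall>x\<in>{a..min b (x0 - 4*t)}. \<alpha> \<le> \<bar>v x\<bar>" and "\<forall>x\<in>{max a (x0 + 4*t)..b}. \<alpha> \<le> \<bar>v x\<bar>"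
      by (auto intro!: far)
    from this[THEN IH[OF \<open>\<alpha> > 0\<close>]]
    show "emeasure lborel {x\<in>{a..min b (x0 - 4*t)}. \<bar>u x\<bar> < \<delta>} \<le> ennreal (c * t)"
      and "emeasure lborel {x\<in>{max a (x0 + 4*t)..b}. \<bar>u x\<bar> < \<delta>} \<le> ennreal (c * t)"
      unfolding \<delta>\<alpha> by auto
  qed (use \<open>t > 0\<close> in simp)
  also have "\<dots> = ennreal ((2 * c + 8) * t)"
    using \<open>c \<ge> 0\<close> \<open>t > 0\<close> by (simp add: ennreal_plus[symmetric] algebra_simps del: ennreal_plus)
  finally show ?thesis
    unfolding t_def .
qed

lemma sublevel_measure_le:
  fixes g :: "nat \<Rightarrow> real \<Rightarrow> real"
  assumes "\<And>i x. i \<le> k \<Longrightarrow> (g i has_real_derivative g (Suc i) x) (at x)"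
    and "\<eta> > 0" and "\<delta> > 0" and "\<forall>x\<in>{a..b}. \<eta> \<le> \<bar>g (Suc k) x\<bar>"
  shows "emeasure lborel {x\<in>{a..b}. \<bar>g 0 x\<bar> < \<delta>}
           \<le> ennreal ((12 * 2^k - 8) * (\<delta>/\<eta>) powr (1 / Suc k))"
  using assms
proof (induction k arbitrary: a b \<eta>)
  case 0
  obtain x0 where "{x\<in>{a..b}. \<bar>g 0 x\<bar> < \<delta>} \<subseteq> {x0 - 2*\<delta>/\<eta> .. x0 + 2*\<delta>/\<eta>}"
    using sublevel_subset_interval[of "g 0" "g 1" \<eta> a b \<delta>] "0.prems" by auto
  then have "emeasure lborel {x\<in>{a..b}. \<bar>g 0 x\<bar> < \<delta>} \<le> emeasure lborel {x0 - 2*\<delta>/\<eta> .. x0 + 2*\<delta>/\<eta>}"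
    by (rule emeasure_mono) simp
  also have "\<dots> = ennreal (4 * (\<delta>/\<eta>))"
    using "0.prems" by (simp add: field_simps)
  finally show ?case using "0.prems" by simp
next
  case (Suc k)
  have "continuous_on UNIV (g 0)"
    using Suc.prems(1)[of 0] by (intro continuous_at_imp_continuous_on ballI) (blast intro: DERIV_isCont)
  moreover have "\<And>x. (g (Suc k) has_real_derivative g (Suc (Suc k)) x) (at x)"
    using Suc.prems(1) by blast
  moreover have "(12 * 2^k - 8 :: real) \<ge> 0"
    using one_le_power[of "2::real" k] by linarith
  moreover note Suc.IH[OF Suc.prems(1)]
  ultimately have "emeasure lborel {x\<in>{a..b}. \<bar>g 0 x\<bar> < \<delta>}
      \<le> ennreal ((2 * (12 * 2^k - 8) + 8) * (\<delta>/\<eta>) powr (1 / Suc (Suc k)))"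
    using Suc.prems(2-4) by (intro sublevel_measure_le_step[where v = "g (Suc k)"]) simp_all
  then show ?case
    by (simp add: algebra_simps)
qed

lemma sublevel_measure_le_uniform:
  fixes g :: "nat \<Rightarrow> real \<Rightarrow> real"
  assumes "\<And>i x. i < k \<Longrightarrow> (g i has_real_derivative g (Suc i) x) (at x)"
    and "k \<le> D" and "\<delta> > 0" and "\<delta> \<le> \<eta>" and large: "\<forall>x\<in>{a..b}. \<eta> \<le> \<bar>g k x\<bar>"
  shows "emeasure lborel {x\<in>{a..b}. \<bar>g 0 x\<bar> < \<delta>} \<le> ennreal (12 * 2^D * (\<delta>/\<eta>) powr (1 / real (max 1 D)))"
proof (cases k)
  case 0
  then have "{x\<in>{a..b}. \<bar>g 0 x\<bar> < \<delta>} = {}"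
    using large \<open>\<delta> \<le> \<eta>\<close> by force
  then show ?thesis
    by (simp only: emeasure_empty) simp
next
  case (Suc k')
  have "emeasure lborel {x\<in>{a..b}. \<bar>g 0 x\<bar> < \<delta>} \<le> ennreal ((12 * 2^k' - 8) * (\<delta>/\<eta>) powr (1 / Suc k'))"
    by (rule sublevel_measure_le) (use assms Suc in auto)
  also have "\<dots> \<le> ennreal (12 * 2^D * (\<delta>/\<eta>) powr (1 / real (max 1 D)))"
  proof (intro ennreal_leI mult_mono)
    have "(2::real)^k' \<le> 2^D"
      using Suc \<open>k \<le> D\<close> by (intro power_increasing) auto
    then show "12 * 2^k' - 8 \<le> (12 * 2^D :: real)"
      by linarith
    have "1 / real (max 1 D) \<le> 1 / real (Suc k')"
      using Suc \<open>k \<le> D\<close> by (intro divide_left_mono) auto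
    then show "(\<delta>/\<eta>) powr (1 / Suc k') \<le> (\<delta>/\<eta>) powr (1 / real (max 1 D))"
      using \<open>\<delta> > 0\<close> \<open>\<delta> \<le> \<eta>\<close> by (intro powr_mono') auto
  qed simp_all
  finally show ?thesis .
qed

lemma emeasure_le_interval_cover:
  fixes P :: "real \<Rightarrow> bool" and c :: real
  assumes "\<rho> > 0" and "c \<ge> 0"
    and sets: "\<And>a b. {y\<in>{a..b}. P y} \<in> sets lborel"
    and local: "\<And>y0. emeasure lborel {y\<in>{y0 - \<rho>..y0 + \<rho>}. P y} \<le> ennreal c"
  shows "emeasure lborel {y\<in>{a..b}. P y} \<le> ennreal (real (Suc (nat \<lceil>(b - a) / \<rho>\<rceil>)) * c)"
proof -
  define M where "M = nat \<lceil>(b - a) / \<rho>\<rceil>"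
  define I where "I m = {y\<in>{(a + m * \<rho>) - \<rho>..(a + m * \<rho>) + \<rho>}. P y}" for m :: nat
  have I_sets: "I m \<in> sets lborel" for m
    unfolding I_def by (rule sets)
  have "{y\<in>{a..b}. P y} \<subseteq> (\<Union>m\<le>M. I m)"
  proof
    fix y assume y: "y \<in> {y\<in>{a..b}. P y}"
    define m where "m = nat \<lfloor>(y - a) / \<rho>\<rfloor>"
    have "0 \<le> (y - a) / \<rho>" "(y - a) / \<rho> \<le> (b - a) / \<rho>"
      using y \<open>\<rho> > 0\<close> by (auto intro: divide_right_mono)
    then have "m \<le> M" "real m \<le> (y - a) / \<rho>" "(y - a) / \<rho> < real m + 1"
      unfolding m_def M_def by linarith+
    then have "m \<le> M" "a + m * \<rho> \<le> y" "y \<le> a + m * \<rho> + \<rho>"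
      using \<open>\<rho> > 0\<close> by (simp_all add: field_simps)
    with y \<open>\<rho> > 0\<close> show "y \<in> (\<Union>m\<le>M. I m)"
      unfolding I_def by (intro UN_I[of m]) auto
  qed
  then have "emeasure lborel {y\<in>{a..b}. P y} \<le> emeasure lborel (\<Union>m\<le>M. I m)"
    by (rule emeasure_mono) (use I_sets in auto)
  also have "\<dots> \<le> (\<Sum>m\<le>M. emeasure lborel (I m))"
    by (rule emeasure_subadditive_finite) (use I_sets in auto)
  also have "\<dots> \<le> (\<Sum>m\<le>M. ennreal c)"
    unfolding I_def by (intro sum_mono local)
  also have "\<dots> = ennreal (real (Suc M) * c)"
    using \<open>c \<ge> 0\<close> by (simp add: ennreal_mult' ennreal_of_nat_eq_real_of_nat)
  finally show ?thesis unfolding M_def .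
qed

section \<open>Exponential sums\<close>

definition exp_sum :: "'a set \<Rightarrow> ('a \<Rightarrow> complex) \<Rightarrow> ('a \<Rightarrow> real) \<Rightarrow> nat \<Rightarrow> real \<Rightarrow> complex" where
  "exp_sum A d \<omega> k y = (\<Sum>a\<in>A. d a * (\<i> * \<omega> a)^k * exp (\<i> * \<omega> a * y))"

lemma exp_sum_has_vector_derivative:
  "((\<lambda>y. exp_sum A d \<omega> k (y + v)) has_vector_derivative exp_sum A d \<omega> (Suc k) (y + v)) (at y)"
proof -
  have "((\<lambda>y. exp (c * (y + v))) has_vector_derivative c * exp (c * (y + v))) (at y)" for c :: complex
  proof -
    have "((\<lambda>z. exp (c * (z + v))) has_field_derivative c * exp (c * (y + v))) (at (complex_of_real y))"
      by (auto intro!: derivative_eq_intros)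
    from has_vector_derivative_real_field[OF this] show ?thesis by simp
  qed
  then have "((\<lambda>y. \<Sum>a\<in>A. d a * (\<i> * \<omega> a)^k * exp (\<i> * \<omega> a * (y + v)))
      has_vector_derivative (\<Sum>a\<in>A. d a * (\<i> * \<omega> a)^k * (\<i> * \<omega> a * exp (\<i> * \<omega> a * (y + v))))) (at y)"
    by (intro has_vector_derivative_sum has_vector_derivative_mult_right)
  then show ?thesis
    unfolding exp_sum_def by (simp add: algebra_simps)
qed

lemma exp_sum_Re_has_real_derivative:
  "((\<lambda>y. Re (w * exp_sum A d \<omega> k (y + v))) has_real_derivative Re (w * exp_sum A d \<omega> (Suc k) (y + v))) (at y)"
  unfolding has_real_derivative_iff_has_vector_derivative
  by (intro bounded_linear.has_vector_derivative[OF bounded_linear_Re]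
        has_vector_derivative_mult_right exp_sum_has_vector_derivative)

lemma continuous_on_norm_exp_sum: "continuous_on UNIV (\<lambda>y. norm (exp_sum A d \<omega> k (y + v)))"
  by (intro continuous_on_norm continuous_at_imp_continuous_on ballI
      has_vector_derivative_continuous[OF exp_sum_has_vector_derivative])

lemma norm_exp_sum_le: "norm (exp_sum A d \<omega> k y) \<le> (\<Sum>a\<in>A. norm (d a) * \<bar>\<omega> a\<bar>^k)"
  unfolding exp_sum_def by (rule order.trans[OF norm_sum]) (simp add: norm_mult norm_power)

lemma exp_sum_derivs_bounded:
  obtains B where "B > 0" and "\<And>k x. k \<le> D \<Longrightarrow> norm (exp_sum A d \<omega> (Suc k) x) \<le> B"
proof
  define B where "B = 1 + (\<Sum>k\<le>D. \<Sum>a\<in>A. norm (d a) * \<bar>\<omega> a\<bar>^Suc k)"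
  show "B > 0" unfolding B_def by (simp add: add_pos_nonneg sum_nonneg)
  fix k x assume "k \<le> D"
  have "norm (exp_sum A d \<omega> (Suc k) x) \<le> (\<Sum>a\<in>A. norm (d a) * \<bar>\<omega> a\<bar>^Suc k)"
    by (rule norm_exp_sum_le)
  also have "\<dots> \<le> (\<Sum>k\<le>D. \<Sum>a\<in>A. norm (d a) * \<bar>\<omega> a\<bar>^Suc k)"
    using \<open>k \<le> D\<close> by (intro member_le_sum) (auto intro: sum_nonneg)
  finally show "norm (exp_sum A d \<omega> (Suc k) x) \<le> B" unfolding B_def by simp
qed

lemma sum_coeff_exp_sum:
  "(\<Sum>k\<le>degree p. coeff p k * exp_sum A d \<omega> k y) = (\<Sum>a\<in>A. d a * exp (\<i> * \<omega> a * y) * poly p (\<i> * \<omega> a))"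
proof -
  have "(\<Sum>k\<le>degree p. coeff p k * exp_sum A d \<omega> k y)
      = (\<Sum>a\<in>A. d a * exp (\<i> * \<omega> a * y) * (\<Sum>k\<le>degree p. coeff p k * (\<i> * \<omega> a) ^ k))"
    unfolding exp_sum_def
    by (simp add: sum_distrib_left sum_distrib_right algebra_simps sum.swap[of _ "{..degree p}"])
  then show ?thesis
    by (simp add: poly_altdef)
qed

lemma exp_sum_deriv_bounded_below:
  assumes "finite A" and "a1 \<in> A" and "d a1 \<noteq> 0" and "inj_on \<omega> A"
  obtains \<eta> D where "\<eta> > 0" and "\<And>x. \<exists>k\<le>D. \<eta> \<le> norm (exp_sum A d \<omega> k x)"
proof -
  define c where "c a = \<i> * complex_of_real (\<omega> a)" for a
  define p where "p = (\<Prod>a\<in>A-{a1}. [:- c a, 1:])"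
  define X where "X = norm (d a1) * norm (poly p (c a1))"
  define S where "S = (\<Sum>k\<le>degree p. norm (coeff p k))"
  have p_other: "poly p (c a) = 0" if "a \<in> A - {a1}" for a
    unfolding p_def poly_prod using that assms(1) by (auto intro!: prod_zero)
  have "poly p (c a1) \<noteq> 0"
    unfolding p_def poly_prod using assms(1,2,4) by (auto simp: c_def inj_on_def)
  then have "X > 0" unfolding X_def using assms(3) by simp
  have "S \<ge> 0" unfolding S_def by (auto intro: sum_nonneg)
  \<comment> \<open>The operator p(d/dy) annihilates every exponential except the one with frequency \<omega> a1.\<close>
  have isolate: "(\<Sum>k\<le>degree p. coeff p k * exp_sum A d \<omega> k x) = d a1 * exp (c a1 * x) * poly p (c a1)"
    for x
    unfolding sum_coeff_exp_sum c_def[symmetric] using assms(1,2) p_other by (simp add: sum.remove)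
  show thesis
  proof (rule that[of "X / (S + 1)" "degree p"])
    show "X / (S + 1) > 0" using \<open>X > 0\<close> \<open>S \<ge> 0\<close> by simp
    fix x
    show "\<exists>k\<le>degree p. X / (S + 1) \<le> norm (exp_sum A d \<omega> k x)"
    proof (rule ccontr)
      assume "\<not> ?thesis"
      then have small: "norm (exp_sum A d \<omega> k x) \<le> X / (S + 1)" if "k \<le> degree p" for k
        using that by force
      have "norm (exp (c a1 * x)) = 1" by (simp add: c_def norm_exp_eq_Re)
      then have "X = norm (\<Sum>k\<le>degree p. coeff p k * exp_sum A d \<omega> k x)"
        unfolding isolate X_def by (simp add: norm_mult)
      also have "\<dots> \<le> (\<Sum>k\<le>degree p. norm (coeff p k) * (X / (S + 1)))"
        by (intro order.trans[OF norm_sum] sum_mono)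
          (simp add: norm_mult mult_left_mono small del: times_divide_eq_right)
      also have "\<dots> = S * (X / (S + 1))"
        unfolding S_def by (rule sum_distrib_right[symmetric])
      also have "\<dots> < X"
        using \<open>S \<ge> 0\<close> \<open>X > 0\<close> by (simp add: field_simps)
      finally show False by simp
    qed
  qed
qed

lemma exists_unimodular_Re_ge:
  fixes z :: complex
  obtains w where "norm w = 1" and "norm z / 2 \<le> \<bar>Re (w * z)\<bar>"
proof -
  have "norm z \<le> \<bar>Re z\<bar> + \<bar>Im z\<bar>"
    by (rule cmod_le)
  then have "norm z / 2 \<le> \<bar>Re (1 * z)\<bar> \<or> norm z / 2 \<le> \<bar>Re (- \<i> * z)\<bar>"
    by auto
  then show thesis
    using that[of 1] that[of "- \<i>"] by auto
qed

lemma exp_sum_sublevel_near_large_deriv: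
  assumes "k \<le> D" and "\<delta> > 0" and "4 * \<delta> \<le> \<eta>" and "B > 0"
    and B: "\<And>x. norm (exp_sum A d \<omega> (Suc k) x) \<le> B"
    and large: "\<eta> \<le> norm (exp_sum A d \<omega> k (y0 + v))"
  shows "emeasure lborel {y\<in>{y0 - \<eta>/(4*B)..y0 + \<eta>/(4*B)}. norm (exp_sum A d \<omega> 0 (y + v)) < \<delta>}
           \<le> ennreal (12 * 2^D * (4*\<delta>/\<eta>) powr (1 / real (max 1 D)))"
proof -
  define \<rho> where "\<rho> = \<eta>/(4*B)"
  obtain w where "norm w = 1" and "norm (exp_sum A d \<omega> k (y0 + v)) / 2 \<le> \<bar>Re (w * exp_sum A d \<omega> k (y0 + v))\<bar>"
    by (rule exists_unimodular_Re_ge)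
  with large have w: "\<eta>/2 \<le> \<bar>Re (w * exp_sum A d \<omega> k (y0 + v))\<bar>"
    by linarith
  define g where "g i y = Re (w * exp_sum A d \<omega> i (y + v))" for i y
  have g_deriv: "(g i has_real_derivative g (Suc i) y) (at y)" for i y
    unfolding g_def by (rule exp_sum_Re_has_real_derivative)
  have g_le: "\<bar>g i y\<bar> \<le> norm (exp_sum A d \<omega> i (y + v))" for i y
    unfolding g_def using abs_Re_le_cmod[of "w * _"] \<open>norm w = 1\<close> by (simp add: norm_mult)
  \<comment> \<open>The bound B on the next derivative keeps g k away from zero on a neighbourhood of fixed size.\<close>
  have g_large: "\<eta>/4 \<le> \<bar>g k y\<bar>" if "y \<in> {y0 - \<rho>..y0 + \<rho>}" for y
  proof -
    have "\<bar>g k y - g k y0\<bar> \<le> B * \<bar>y - y0\<bar>"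
      using abs_diff_le_of_deriv_le[OF g_deriv] g_le B order.trans by blast
    also have "\<dots> \<le> B * \<rho>" using that \<open>B > 0\<close> by (intro mult_left_mono) auto
    also have "\<dots> = \<eta>/4" unfolding \<rho>_def using \<open>B > 0\<close> by simp
    finally show ?thesis using w unfolding g_def by linarith
  qed
  have "{y\<in>{y0 - \<rho>..y0 + \<rho>}. norm (exp_sum A d \<omega> 0 (y + v)) < \<delta>} \<subseteq> {y\<in>{y0 - \<rho>..y0 + \<rho>}. \<bar>g 0 y\<bar> < \<delta>}"
    using g_le le_less_trans by blast
  moreover have "{y\<in>{y0 - \<rho>..y0 + \<rho>}. \<bar>g 0 y\<bar> < \<delta>} \<in> sets lborel"
    using g_deriv by (intro sets_lborel_sublevel continuous_on_rabs continuous_at_imp_continuous_on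
        ballI DERIV_isCont)
  ultimately have "emeasure lborel {y\<in>{y0 - \<rho>..y0 + \<rho>}. norm (exp_sum A d \<omega> 0 (y + v)) < \<delta>}
      \<le> emeasure lborel {y\<in>{y0 - \<rho>..y0 + \<rho>}. \<bar>g 0 y\<bar> < \<delta>}"
    by (rule emeasure_mono)
  also have "\<dots> \<le> ennreal (12 * 2^D * (\<delta>/(\<eta>/4)) powr (1 / real (max 1 D)))"
    using g_deriv g_large \<open>k \<le> D\<close> \<open>\<delta> > 0\<close> \<open>4 * \<delta> \<le> \<eta>\<close> by (intro sublevel_measure_le_uniform) auto
  also have "\<delta>/(\<eta>/4) = 4*\<delta>/\<eta>"
    by simp
  finally show ?thesis
    unfolding \<rho>_def .
qed

lemma exp_sum_sublevel_measure_le: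
  assumes "\<eta> > 0" and large: "\<And>x. \<exists>k\<le>D. \<eta> \<le> norm (exp_sum A d \<omega> k x)"
    and "B > 0" and B: "\<And>k x. k \<le> D \<Longrightarrow> norm (exp_sum A d \<omega> (Suc k) x) \<le> B"
    and "\<delta> > 0" and "4 * \<delta> \<le> \<eta>"
  shows "emeasure lborel {y\<in>{a..b}. norm (exp_sum A d \<omega> 0 (y + v)) < \<delta>}
           \<le> ennreal (real (Suc (nat \<lceil>(b - a) / (\<eta>/(4*B))\<rceil>)) * (12 * 2^D * (4*\<delta>/\<eta>) powr (1 / real (max 1 D))))"
proof (rule emeasure_le_interval_cover)
  show "{y\<in>{a'..b'}. norm (exp_sum A d \<omega> 0 (y + v)) < \<delta>} \<in> sets lborel" for a' b'
    by (rule sets_lborel_sublevel[OF continuous_on_norm_exp_sum])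
  fix y0
  obtain k where "k \<le> D" "\<eta> \<le> norm (exp_sum A d \<omega> k (y0 + v))"
    using large by blast
  then show "emeasure lborel {y\<in>{y0 - \<eta>/(4*B)..y0 + \<eta>/(4*B)}. norm (exp_sum A d \<omega> 0 (y + v)) < \<delta>}
      \<le> ennreal (12 * 2^D * (4*\<delta>/\<eta>) powr (1 / real (max 1 D)))"
    using exp_sum_sublevel_near_large_deriv[OF _ \<open>\<delta> > 0\<close> \<open>4 * \<delta> \<le> \<eta>\<close> \<open>B > 0\<close>] B by blast
qed (use \<open>\<eta> > 0\<close> \<open>B > 0\<close> in auto)

section \<open>Counting small values\<close>

text \<open>Up to 1 this is max 0 (ln (1 / r)) for r > 0; it is infinite for r \<le> 0.\<close>

definition level_count :: "real \<Rightarrow> ennreal" where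
  "level_count r = (\<Sum>s. indicator {..<exp (- real s)} r)"

lemma borel_measurable_level_count [measurable]: "level_count \<in> borel_measurable borel"
  unfolding level_count_def[abs_def] by measurable

lemma nn_integral_level_count:
  fixes h :: "real \<Rightarrow> real"
  assumes [measurable]: "h \<in> borel_measurable borel"
  shows "(\<integral>\<^sup>+y. level_count (h y) * indicator {a..b} y \<partial>lborel)
           = (\<Sum>s. emeasure lborel {y\<in>{a..b}. h y < exp (- real s)})"
proof -
  have "level_count (h y) * indicator {a..b} y = (\<Sum>s. indicator {y\<in>{a..b}. h y < exp (- real s)} y)" for y
    unfolding level_count_def by (auto simp: indicator_def)
  then have "(\<integral>\<^sup>+y. level_count (h y) * indicator {a..b} y \<partial>lborel)
      = (\<Sum>s. \<integral>\<^sup>+y. indicator {y\<in>{a..b}. h y < exp (- real s)} y \<partial>lborel)"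
    by (simp add: nn_integral_suminf)
  also have "\<dots> = (\<Sum>s. emeasure lborel {y\<in>{a..b}. h y < exp (- real s)})"
    by (intro suminf_cong nn_integral_indicator) measurable
  finally show ?thesis .
qed

lemma suminf_le_geometric_tail:
  fixes \<mu> :: "nat \<Rightarrow> ennreal"
  assumes "c \<ge> 0" and "K \<ge> 0" and "0 < \<theta>" and "\<theta> < 1"
    and "\<And>s. \<mu> s \<le> ennreal c" and "\<And>s. s \<ge> s0 \<Longrightarrow> \<mu> s \<le> ennreal (K * \<theta>^s)"
  shows "(\<Sum>s. \<mu> s) \<le> ennreal (c * s0 + K / (1 - \<theta>))"
proof -
  define bound where "bound s = (if s < s0 then c else 0) + K * \<theta>^s" for s
  have "\<mu> s \<le> ennreal (bound s)" for s
    using assms(5,6)[of s] assms(1-3) unfolding bound_def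
    by (cases "s < s0") (auto intro: order.trans ennreal_leI)
  then have "(\<Sum>s. \<mu> s) \<le> (\<Sum>s. ennreal (bound s))"
    by (intro suminf_le summableI)
  also have "\<dots> = ennreal (c * s0 + K / (1 - \<theta>))"
  proof (rule suminf_ennreal_eq)
    show "bound s \<ge> 0" for s
      unfolding bound_def using assms(1-3) by simp
    have "(\<lambda>s. if s < s0 then c else 0) sums (\<Sum>s | s < s0. c)"
      by (rule sums_If_finite) simp
    moreover have "(\<lambda>s. K * \<theta>^s) sums (K * (1 / (1 - \<theta>)))"
      using assms(3,4) by (intro sums_mult geometric_sums) simp
    ultimately show "bound sums (c * s0 + K / (1 - \<theta>))"
      unfolding bound_def by (simp add: sums_add mult.commute)
  qed
  finally show ?thesis .
qed

lemma exp_sum_level_count_integral_bounded: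
  assumes "finite A" and "a1 \<in> A" and "d a1 \<noteq> 0" and "inj_on \<omega> A" and "a \<le> b"
  shows "\<exists>Z. \<forall>v. (\<integral>\<^sup>+y. level_count (norm (exp_sum A d \<omega> 0 (y + v))) * indicator {a..b} y \<partial>lborel)
                  \<le> ennreal Z"
proof -
  obtain \<eta> D where "\<eta> > 0" and large: "\<And>x. \<exists>k\<le>D. \<eta> \<le> norm (exp_sum A d \<omega> k x)"
    using exp_sum_deriv_bounded_below assms by metis
  obtain B where "B > 0" and B: "\<And>k x. k \<le> D \<Longrightarrow> norm (exp_sum A d \<omega> (Suc k) x) \<le> B"
    using exp_sum_derivs_bounded by metis
  define e where "e = 1 / real (max 1 D)"
  define \<theta> where "\<theta> = exp (- e)"
  have "0 < \<theta>" "\<theta> < 1" unfolding \<theta>_def e_def by auto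
  define K where "K = real (Suc (nat \<lceil>(b - a) / (\<eta>/(4*B))\<rceil>)) * (12 * 2^D) * (4/\<eta>) powr e"
  define s0 where "s0 = nat \<lceil>ln (4/\<eta>)\<rceil>"
  let ?level = "\<lambda>v s. {y\<in>{a..b}. norm (exp_sum A d \<omega> 0 (y + v)) < exp (- real s)}"
  have "emeasure lborel (?level v s) \<le> ennreal (b - a)" for v s
    by (rule order.trans[OF emeasure_mono[of _ "{a..b}"]]) (use \<open>a \<le> b\<close> in auto)
  moreover have "emeasure lborel (?level v s) \<le> ennreal (K * \<theta>^s)" if "s \<ge> s0" for v s
  proof -
    have "ln (4/\<eta>) \<le> real s"
      using that unfolding s0_def by linarith
    then have "4/\<eta> \<le> exp (real s)"
      using \<open>\<eta> > 0\<close> by (metis exp_le_cancel_iff exp_ln zero_less_divide_iff zero_less_numeral)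
    then have "4 * exp (- real s) \<le> \<eta>"
      using \<open>\<eta> > 0\<close> by (simp add: field_simps exp_minus)
    from exp_sum_sublevel_measure_le[OF \<open>\<eta> > 0\<close> large \<open>B > 0\<close> B _ this]
    have "emeasure lborel (?level v s)
        \<le> ennreal (real (Suc (nat \<lceil>(b - a) / (\<eta>/(4*B))\<rceil>)) * (12 * 2^D * (4 * exp (- real s) / \<eta>) powr e))"
      unfolding e_def by simp
    also have "(4 * exp (- real s) / \<eta>) powr e = (4/\<eta>) powr e * \<theta>^s"
    proof -
      have "(4 * exp (- real s) / \<eta>) powr e = (4/\<eta>) powr e * exp (- real s) powr e"
        by (simp add: powr_mult[symmetric])
      also have "exp (- real s) powr e = \<theta>^s"
        unfolding \<theta>_def exp_powr_real exp_of_nat_mult[symmetric] by (simp add: mult.commute)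
      finally show ?thesis .
    qed
    finally show ?thesis
      unfolding K_def by (simp add: mult.assoc)
  qed
  moreover have "K \<ge> 0"
    unfolding K_def by simp
  ultimately have "(\<Sum>s. emeasure lborel (?level v s)) \<le> ennreal ((b - a) * s0 + K / (1 - \<theta>))" for v
    using \<open>a \<le> b\<close> \<open>0 < \<theta>\<close> \<open>\<theta> < 1\<close> by (intro suminf_le_geometric_tail) auto
  moreover have "(\<integral>\<^sup>+y. level_count (norm (exp_sum A d \<omega> 0 (y + v))) * indicator {a..b} y \<partial>lborel)
      = (\<Sum>s. emeasure lborel (?level v s))" for v
    using continuous_on_norm_exp_sum by (intro nn_integral_level_count borel_measurable_continuous_onI)
  ultimately show ?thesis
    by auto
qed

lemma exp_neg_le_of_level_count_le:
  assumes "x \<ge> 0" and "level_count r \<le> ennreal x"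
  shows "exp (- x) \<le> r"
proof -
  define s where "s = nat \<lfloor>x\<rfloor>"
  have "\<not> r < exp (- real s)"
  proof
    assume r: "r < exp (- real s)"
    have "(\<Sum>i<Suc s. indicator {..<exp (- real i)} r) = (\<Sum>i<Suc s. 1 :: ennreal)"
      using r by (intro sum.cong) (auto simp: less_le_trans)
    moreover have "(\<Sum>i<Suc s. indicator {..<exp (- real i)} r) \<le> level_count r"
      unfolding level_count_def by (intro sum_le_suminf summableI) auto
    ultimately have "ennreal (real (Suc s)) \<le> level_count r"
      by (simp add: ennreal_of_nat_eq_real_of_nat)
    then have "ennreal (real (Suc s)) \<le> ennreal x"
      using assms(2) by (rule order.trans)
    then have "real (Suc s) \<le> x"
      using \<open>x \<ge> 0\<close> ennreal_le_iff by blast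
    then show False unfolding s_def using \<open>x \<ge> 0\<close> by linarith
  qed
  moreover have "exp (- x) \<le> exp (- real s)"
    unfolding s_def using \<open>x \<ge> 0\<close> by simp
  ultimately show ?thesis by linarith
qed

lemma max_div_le_of_level_count_le:
  assumes "x \<ge> 0" and "C \<ge> 0" and "level_count r \<le> ennreal x"
  shows "r > 0" and "max 1 (C / r) \<le> max 1 C * exp x"
proof -
  have "exp (- x) \<le> r"
    using assms(1,3) by (rule exp_neg_le_of_level_count_le)
  then show "r > 0"
    using exp_gt_zero less_le_trans by blast
  with \<open>exp (- x) \<le> r\<close> have "1 / r \<le> 1 / exp (- x)"
    by (intro divide_left_mono) auto
  then have "C * (1 / r) \<le> max 1 C * exp x"
    using \<open>C \<ge> 0\<close> \<open>r > 0\<close> by (intro mult_mono) (auto simp: exp_minus inverse_eq_divide[symmetric])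
  moreover have "1 * 1 \<le> max 1 C * exp x"
    using \<open>x \<ge> 0\<close> by (intro mult_mono) auto
  ultimately show "max 1 (C / r) \<le> max 1 C * exp x"
    by simp
qed

lemma prod_max_le_of_level_count_sum_le:
  fixes q :: "nat \<Rightarrow> real"
  assumes "X \<ge> 0" and "C \<ge> 0" and count: "(\<Sum>j<N. level_count (q j)) \<le> ennreal X"
  shows "\<forall>j<N. q j > 0" and "(\<Prod>j<N. max 1 (C / q j)) \<le> max 1 C ^ N * exp X"
proof -
  define x where "x j = enn2real (level_count (q j))" for j
  have x_nonneg: "x j \<ge> 0" for j
    unfolding x_def by simp
  have x: "level_count (q j) = ennreal (x j)" if "j < N" for j
  proof -
    have "level_count (q j) \<le> (\<Sum>j<N. level_count (q j))"
      using that by (intro member_le_sum) auto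
    then have "level_count (q j) \<le> ennreal X"
      using count by (rule order.trans)
    then show ?thesis
      unfolding x_def by (metis ennreal_enn2real_if ennreal_neq_top top_unique)
  qed
  have "ennreal (\<Sum>j<N. x j) = (\<Sum>j<N. ennreal (x j))"
    by (rule sum_ennreal[symmetric]) (simp add: x_nonneg)
  also have "\<dots> = (\<Sum>j<N. level_count (q j))"
    using x by simp
  finally have "(\<Sum>j<N. x j) \<le> X"
    using count \<open>X \<ge> 0\<close> ennreal_le_iff by metis
  have q: "q j > 0" "max 1 (C / q j) \<le> max 1 C * exp (x j)" if "j < N" for j
    using max_div_le_of_level_count_le[OF x_nonneg[of j] \<open>C \<ge> 0\<close>, where r = "q j"] x[OF that] by simp_all
  then show "\<forall>j<N. q j > 0"
    by blast
  have "(\<Prod>j<N. max 1 (C / q j)) \<le> (\<Prod>j<N. max 1 C * exp (x j))"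
    using q by (intro prod_mono) auto
  also have "\<dots> = max 1 C ^ N * exp (\<Sum>j<N. x j)"
    by (simp add: prod.distrib exp_sum)
  also have "\<dots> \<le> max 1 C ^ N * exp X"
    using \<open>(\<Sum>j<N. x j) \<le> X\<close> by (intro mult_left_mono) auto
  finally show "(\<Prod>j<N. max 1 (C / q j)) \<le> max 1 C ^ N * exp X" .
qed

lemma emeasure_level_count_sum_Markov:
  fixes q :: "real \<Rightarrow> real" and N :: nat
  assumes [measurable]: "q \<in> borel_measurable borel"
    and "Z \<ge> 0" and "L > 0" and "N \<ge> 1"
    and Z: "\<And>v. (\<integral>\<^sup>+y. level_count (q (y + v)) * indicator {-R..R} y \<partial>lborel) \<le> ennreal Z"
  shows "emeasure lborel {y\<in>{-R..R}. ennreal (L * real N) \<le> (\<Sum>j<N. level_count (q (y + real j * b)))}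
           \<le> ennreal (Z / L)"
proof -
  define F where "F y = (\<Sum>j<N. level_count (q (y + real j * b)))" for y
  define c where "c = ennreal (1 / (L * real N))"
  have [measurable]: "F \<in> borel_measurable borel"
    unfolding F_def by measurable
  have "c * ennreal (L * real N) = 1"
    using \<open>L > 0\<close> \<open>N \<ge> 1\<close> by (simp add: c_def ennreal_mult''[symmetric])
  then have "{y\<in>{-R..R}. ennreal (L * real N) \<le> F y} \<subseteq> {y\<in>{-R..R}. 1 \<le> c * F y}"
    by (auto intro: order.trans[OF eq_refl mult_left_mono])
  then have "emeasure lborel {y\<in>{-R..R}. ennreal (L * real N) \<le> F y} \<le> emeasure lborel {y\<in>{-R..R}. 1 \<le> c * F y}"
    by (rule emeasure_mono) measurable
  also have "\<dots> \<le> c * (\<integral>\<^sup>+y. F y * indicator {-R..R} y \<partial>lborel)"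
    by (rule nn_integral_Markov_inequality) measurable
  also have "(\<integral>\<^sup>+y. F y * indicator {-R..R} y \<partial>lborel)
      = (\<Sum>j<N. \<integral>\<^sup>+y. level_count (q (y + real j * b)) * indicator {-R..R} y \<partial>lborel)"
    unfolding F_def sum_distrib_right by (rule nn_integral_sum) measurable
  also have "\<dots> \<le> (\<Sum>j<N. ennreal Z)"
    by (intro sum_mono Z)
  also have "c * \<dots> = ennreal (Z / L)"
    using \<open>L > 0\<close> \<open>N \<ge> 1\<close> \<open>Z \<ge> 0\<close>
    by (simp add: c_def ennreal_of_nat_eq_real_of_nat ennreal_mult''[symmetric])
  finally show ?thesis
    unfolding F_def by (simp add: mult_left_mono)
qed

section \<open>The shift recurrence\<close>

lemma window_max_step:
  fixes m :: "nat \<Rightarrow> real"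
  assumes m_nonneg: "\<And>n. m n \<ge> 0" and "K \<ge> 1" and "q > 0"
    and rel: "q * m n \<le> C * Max ((\<lambda>i. m (Suc n + i)) ` {..<K})"
  shows "Max ((\<lambda>i. m (n + i)) ` {..<K}) \<le> max 1 (C / q) * Max ((\<lambda>i. m (Suc n + i)) ` {..<K})"
    (is "_ \<le> _ * ?W")
proof -
  have window: "finite ((\<lambda>i. m (k + i)) ` {..<K})" "(\<lambda>i. m (k + i)) ` {..<K} \<noteq> {}" for k
    using \<open>K \<ge> 1\<close> by (auto simp: lessThan_empty_iff)
  have "m (Suc n + 0) \<le> ?W"
    using window \<open>K \<ge> 1\<close> by (intro Max_ge imageI) auto
  then have "?W \<ge> 0"
    using m_nonneg order.trans by blast
  \<comment> \<open>The window at n consists of m n and the window at n + 1 without its last entry.\<close>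
  have "m (n + i) \<le> max 1 (C / q) * ?W" if "i < K" for i
  proof (cases i)
    case 0
    have "m n \<le> (C / q) * ?W"
      using rel \<open>q > 0\<close> by (simp add: field_simps)
    also have "\<dots> \<le> max 1 (C / q) * ?W"
      using \<open>?W \<ge> 0\<close> by (intro mult_right_mono) auto
    finally show ?thesis using 0 by simp
  next
    case (Suc i')
    then have "m (n + i) \<le> ?W"
      using window that by (intro Max_ge rev_image_eqI[of i']) auto
    also have "\<dots> \<le> max 1 (C / q) * ?W"
      using \<open>?W \<ge> 0\<close> by (intro mult_le_cancel_right1[THEN iffD2]) auto
    finally show ?thesis .
  qed
  then show ?thesis
    using window by (subst Max_le_iff) auto
qed

lemma window_max_iterate:
  fixes m q :: "nat \<Rightarrow> real"
  assumes "\<And>n. m n \<ge> 0" and "K \<ge> 1"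
    and rel: "\<And>n. q n * m n \<le> C * Max ((\<lambda>i. m (Suc n + i)) ` {..<K})"
    and q_pos: "\<And>j. j < N \<Longrightarrow> q j > 0"
  shows "m 0 \<le> (\<Prod>j<N. max 1 (C / q j)) * Max ((\<lambda>i. m (N + i)) ` {..<K})"
proof -
  have "Max ((\<lambda>i. m (0 + i)) ` {..<K}) \<le> (\<Prod>j<N. max 1 (C / q j)) * Max ((\<lambda>i. m (N + i)) ` {..<K})"
    using q_pos
  proof (induction N)
    case (Suc N)
    then have "Max ((\<lambda>i. m (0 + i)) ` {..<K}) \<le> (\<Prod>j<N. max 1 (C / q j)) * Max ((\<lambda>i. m (N + i)) ` {..<K})"
      by simp
    also have "\<dots> \<le> (\<Prod>j<N. max 1 (C / q j)) * (max 1 (C / q N) * Max ((\<lambda>i. m (Suc N + i)) ` {..<K}))"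
      using Suc.prems assms(1,2) rel by (intro mult_left_mono window_max_step prod_nonneg) auto
    finally show ?case
      by (simp add: algebra_simps)
  qed simp
  moreover have "m 0 \<le> Max ((\<lambda>i. m (0 + i)) ` {..<K})"
    using \<open>K \<ge> 1\<close> by (intro Max_ge rev_image_eqI[of 0]) auto
  ultimately show ?thesis
    by linarith
qed

lemma shift_recurrence_bound:
  fixes m q :: "nat \<Rightarrow> real"
  assumes "\<And>n. m n \<ge> 0" and "K \<ge> 1" and "C \<ge> 0" and "X \<ge> 0"
    and rel: "\<And>n. q n * m n \<le> C * Max ((\<lambda>i. m (Suc n + i)) ` {..<K})"
    and count: "(\<Sum>j<N. level_count (q j)) \<le> ennreal X"
    and tail: "\<And>i. i < K \<Longrightarrow> m (N + i) \<le> \<epsilon>"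
  shows "m 0 \<le> max 1 C ^ N * exp X * \<epsilon>"
proof -
  have "\<forall>j<N. q j > 0" and prod: "(\<Prod>j<N. max 1 (C / q j)) \<le> max 1 C ^ N * exp X"
    using prod_max_le_of_level_count_sum_le[OF \<open>X \<ge> 0\<close> \<open>C \<ge> 0\<close> count] by auto
  then have "m 0 \<le> (\<Prod>j<N. max 1 (C / q j)) * Max ((\<lambda>i. m (N + i)) ` {..<K})"
    using window_max_iterate assms(1-3) rel by blast
  also have "\<dots> \<le> max 1 C ^ N * exp X * \<epsilon>"
  proof (intro mult_mono prod)
    show "Max ((\<lambda>i. m (N + i)) ` {..<K}) \<le> \<epsilon>"
      using \<open>K \<ge> 1\<close> tail by (subst Max_le_iff) (auto simp: lessThan_empty_iff)
    show "0 \<le> Max ((\<lambda>i. m (N + i)) ` {..<K})"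
      using \<open>K \<ge> 1\<close> assms(1) by (subst Max_ge_iff) (auto simp: lessThan_empty_iff intro!: exI[of _ 0])
  qed (auto intro: prod_nonneg)
  finally show ?thesis .
qed

lemma superexponential_decay_le:
  fixes f :: "real \<Rightarrow> 'a::real_normed_vector"
  assumes "\<forall>c>0. ((\<lambda>x. norm (f x) * exp (c * x)) \<longlongrightarrow> 0) at_top" and "c > 0"
  obtains X where "\<And>x. x \<ge> X \<Longrightarrow> norm (f x) \<le> exp (- c * x)"
proof -
  have "eventually (\<lambda>x. norm (f x) * exp (c * x) < 1) at_top"
    using assms by (intro order_tendstoD(2)) auto
  then obtain X where "\<And>x. x \<ge> X \<Longrightarrow> norm (f x) * exp (c * x) < 1"
    unfolding eventually_at_top_linorder by blast
  then show thesis
    by (intro that[of X]) (simp add: exp_minus field_simps less_imp_le)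
qed

definition shift_recurrence :: "(real \<Rightarrow> real) \<Rightarrow> (real \<Rightarrow> complex) \<Rightarrow> real \<Rightarrow> real \<Rightarrow> nat \<Rightarrow> real \<Rightarrow> bool"
  where "shift_recurrence q f b C K y \<longleftrightarrow>
    (\<forall>n::nat. q (y + real n * b) * norm (f (y + real n * b))
      \<le> C * Max ((\<lambda>i. norm (f (y + real (Suc n + i) * b))) ` {..<K}))"

lemma norm_le_of_shift_recurrence:
  fixes f :: "real \<Rightarrow> complex" and q :: "real \<Rightarrow> real"
  assumes "b > 0" and "C \<ge> 0" and "K \<ge> 1" and "L \<ge> 0" and "c > 0"
    and decay: "\<And>x. x \<ge> X \<Longrightarrow> norm (f x) \<le> exp (- c * x)"
    and "X + R \<le> N * b" and "y \<ge> -R"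
    and rel: "shift_recurrence q f b C K y"
    and count: "(\<Sum>j<N. level_count (q (y + real j * b))) \<le> ennreal (L * real N)"
  shows "norm (f y) \<le> max 1 C ^ N * exp (L * N) * exp (- c * (N * b - R))"
proof -
  have tail: "norm (f (y + real (N + i) * b)) \<le> exp (- c * (N * b - R))" for i
  proof -
    have "0 \<le> real i * b"
      using \<open>b > 0\<close> by simp
    then have "N * b - R \<le> y + real (N + i) * b"
      unfolding of_nat_add distrib_right using \<open>y \<ge> -R\<close> by linarith
    then have "norm (f (y + real (N + i) * b)) \<le> exp (- c * (y + real (N + i) * b))"
      using decay \<open>X + R \<le> N * b\<close> by simp
    also have "\<dots> \<le> exp (- c * (N * b - R))"
      using \<open>N * b - R \<le> y + real (N + i) * b\<close> \<open>c > 0\<close> by simp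
    finally show ?thesis .
  qed
  have "norm (f (y + real 0 * b)) \<le> max 1 C ^ N * exp (L * N) * exp (- c * (N * b - R))"
    by (rule shift_recurrence_bound[where q = "\<lambda>n. q (y + n * b)"])
      (use rel count tail assms(2-4) in \<open>auto simp: shift_recurrence_def\<close>)
  then show ?thesis
    by simp
qed

lemma norm_less_of_shift_recurrence:
  fixes f :: "real \<Rightarrow> complex" and q :: "real \<Rightarrow> real"
  assumes decay: "\<forall>c>0. ((\<lambda>x. norm (f x) * exp (c * x)) \<longlongrightarrow> 0) at_top"
    and "b > 0" and "C \<ge> 0" and "K \<ge> 1" and "L > 0" and "\<tau> > 0"
  obtains N :: nat where "N \<ge> 1"
    and "\<And>y. y \<ge> -R \<Longrightarrow> shift_recurrence q f b C K y \<Longrightarrow>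
           (\<Sum>j<N. level_count (q (y + real j * b))) \<le> ennreal (L * real N) \<Longrightarrow> norm (f y) < \<tau>"
proof -
  define M where "M = max 1 C"
  \<comment> \<open>The decay rate c beats the growth M^N e^(LN) of the product of the recurrence factors.\<close>
  define c where "c = (ln M + L + 1) / b"
  have "M \<ge> 1" unfolding M_def by simp
  then have "c > 0"
    unfolding c_def using \<open>b > 0\<close> \<open>L > 0\<close> by (simp add: add_nonneg_pos)
  then obtain X where X: "\<And>x. x \<ge> X \<Longrightarrow> norm (f x) \<le> exp (- c * x)"
    using superexponential_decay_le[OF decay] by blast
  define N where "N = nat \<lceil>max ((X + R) / b) (c * R - ln \<tau>)\<rceil> + 1"
  have "(X + R) / b \<le> N" and "c * R - ln \<tau> < N"
    unfolding N_def by linarith+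
  then have "X + R \<le> N * b"
    using \<open>b > 0\<close> by (simp add: field_simps)
  show thesis
  proof (rule that)
    show "N \<ge> 1" unfolding N_def by simp
    fix y
    assume "y \<ge> -R" and "shift_recurrence q f b C K y"
      and "(\<Sum>j<N. level_count (q (y + real j * b))) \<le> ennreal (L * real N)"
    then have "norm (f y) \<le> M ^ N * exp (L * N) * exp (- c * (N * b - R))"
      unfolding M_def using \<open>b > 0\<close> \<open>C \<ge> 0\<close> \<open>K \<ge> 1\<close> \<open>L > 0\<close> \<open>c > 0\<close> X \<open>X + R \<le> N * b\<close>
      by (intro norm_le_of_shift_recurrence) auto
    also have "\<dots> = exp (c * R - N)"
    proof -
      have "M ^ N = exp (N * ln M)"
        using \<open>M \<ge> 1\<close> by (simp add: exp_of_nat_mult)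
      moreover have "b * (c * N) = N * (ln M + L + 1)"
        unfolding c_def using \<open>b > 0\<close> by simp
      ultimately show ?thesis
        by (simp add: exp_add[symmetric] algebra_simps)
    qed
    also have "\<dots> < \<tau>"
      using \<open>c * R - ln \<tau> < N\<close> \<open>\<tau> > 0\<close> by (metis diff_less_eq exp_less_cancel_iff exp_ln add.commute)
    finally show "norm (f y) < \<tau>" .
  qed
qed

lemma AE_zero_of_superlevel_null:
  fixes f :: "real \<Rightarrow> 'a::real_normed_vector"
  assumes [measurable]: "f \<in> borel_measurable lebesgue"
    and null: "\<And>R \<tau>. R \<ge> 0 \<Longrightarrow> \<tau> > 0 \<Longrightarrow> emeasure lebesgue {y\<in>{-R..R}. \<tau> < norm (f y)} = 0"
  shows "AE y in lebesgue. f y = 0"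
proof (rule AE_I')
  define U where "U R t = {y\<in>{- real R..real R}. 1 / Suc t < norm (f y)}" for R t :: nat
  have "{-R..R} \<in> sets lebesgue" for R :: real
    by (simp add: sets_completionI_sets)
  then have "U R t \<in> sets lebesgue" for R t
    unfolding U_def by measurable
  moreover have "emeasure lebesgue (U R t) = 0" for R t
    unfolding U_def by (rule null) simp_all
  ultimately show "(\<Union>R. \<Union>t. U R t) \<in> null_sets lebesgue"
    by (intro null_sets_UN) (simp add: null_sets_def)
  show "{y \<in> space lebesgue. \<not> f y = 0} \<subseteq> (\<Union>R. \<Union>t. U R t)"
  proof
    fix y assume "y \<in> {y \<in> space lebesgue. \<not> f y = 0}"
    then obtain t where "inverse (real (Suc t)) < norm (f y)"
      using reals_Archimedean[of "norm (f y)"] by auto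
    moreover have "y \<in> {- real (nat \<lceil>\<bar>y\<bar>\<rceil>)..real (nat \<lceil>\<bar>y\<bar>\<rceil>)}"
      using le_of_int_ceiling[of "\<bar>y\<bar>"] by (simp add: abs_le_iff; linarith)
    ultimately have "y \<in> U (nat \<lceil>\<bar>y\<bar>\<rceil>) t"
      unfolding U_def by (simp add: inverse_eq_divide)
    then show "y \<in> (\<Union>R. \<Union>t. U R t)" by blast
  qed
qed

lemma emeasure_superlevel_le_of_shift_recurrence:
  fixes f :: "real \<Rightarrow> complex" and q :: "real \<Rightarrow> real"
  assumes decay: "\<forall>c>0. ((\<lambda>x. norm (f x) * exp (c * x)) \<longlongrightarrow> 0) at_top"
    and "b > 0" and "C \<ge> 0" and "K \<ge> 1" and "Z \<ge> 0" and "L > 0" and "\<tau> > 0"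
    and q [measurable]: "q \<in> borel_measurable borel"
    and Z: "\<And>v. (\<integral>\<^sup>+y. level_count (q (y + v)) * indicator {-R..R} y \<partial>lborel) \<le> ennreal Z"
    and rel: "AE y in lebesgue. shift_recurrence q f b C K y"
  shows "emeasure lebesgue {y\<in>{-R..R}. \<tau> < norm (f y)} \<le> ennreal (Z / L)"
proof -
  obtain N where "N \<ge> 1"
    and small: "\<And>y. y \<ge> -R \<Longrightarrow> shift_recurrence q f b C K y \<Longrightarrow>
      (\<Sum>j<N. level_count (q (y + real j * b))) \<le> ennreal (L * real N) \<Longrightarrow> norm (f y) < \<tau>"
    using norm_less_of_shift_recurrence[OF decay \<open>b > 0\<close> \<open>C \<ge> 0\<close> \<open>K \<ge> 1\<close> \<open>L > 0\<close> \<open>\<tau> > 0\<close>] by blast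
  define B where "B = {y\<in>{-R..R}. ennreal (L * real N) \<le> (\<Sum>j<N. level_count (q (y + real j * b)))}"
  have "B \<in> sets borel"
    unfolding B_def by measurable
  have "AE y in lebesgue. y \<in> {y\<in>{-R..R}. \<tau> < norm (f y)} \<longrightarrow> y \<in> B"
    using rel
  proof eventually_elim
    case (elim y)
    show ?case
    proof
      assume y: "y \<in> {y\<in>{-R..R}. \<tau> < norm (f y)}"
      then have "\<not> (\<Sum>j<N. level_count (q (y + real j * b))) \<le> ennreal (L * real N)"
        using small[of y] elim by auto
      with y show "y \<in> B"
        unfolding B_def by auto
    qed
  qed
  then have "emeasure lebesgue {y\<in>{-R..R}. \<tau> < norm (f y)} \<le> emeasure lebesgue B"
    using \<open>B \<in> sets borel\<close> by (intro emeasure_mono_AE sets_completionI_sets) simp_all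
  also have "\<dots> = emeasure lborel B"
    using \<open>B \<in> sets borel\<close> by simp
  also have "\<dots> \<le> ennreal (Z / L)"
    unfolding B_def by (rule emeasure_level_count_sum_Markov[OF q \<open>Z \<ge> 0\<close> \<open>L > 0\<close> \<open>N \<ge> 1\<close> Z])
  finally show ?thesis .
qed

lemma AE_zero_of_shift_recurrence:
  fixes f :: "real \<Rightarrow> complex" and q :: "real \<Rightarrow> real"
  assumes f: "f \<in> borel_measurable lebesgue"
    and decay: "\<forall>c>0. ((\<lambda>x. norm (f x) * exp (c * x)) \<longlongrightarrow> 0) at_top"
    and "b > 0" and "C \<ge> 0" and "K \<ge> 1"
    and q: "q \<in> borel_measurable borel"
    and level_count_integrable:
      "\<And>R. R \<ge> 0 \<Longrightarrow> \<exists>Z. \<forall>v. (\<integral>\<^sup>+y. level_count (q (y + v)) * indicator {-R..R} y \<partial>lborel) \<le> ennreal Z"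
    and rel: "AE y in lebesgue. shift_recurrence q f b C K y"
  shows "AE y in lebesgue. f y = 0"
proof (rule AE_zero_of_superlevel_null[OF f])
  fix R \<tau> :: real
  assume "R \<ge> 0" and "\<tau> > 0"
  obtain Z0 where Z0: "\<And>v. (\<integral>\<^sup>+y. level_count (q (y + v)) * indicator {-R..R} y \<partial>lborel) \<le> ennreal Z0"
    using level_count_integrable[OF \<open>R \<ge> 0\<close>] by blast
  define Z where "Z = max Z0 0"
  have "Z \<ge> 0" unfolding Z_def by simp
  have Z: "(\<integral>\<^sup>+y. level_count (q (y + v)) * indicator {-R..R} y \<partial>lborel) \<le> ennreal Z" for v
    using Z0[of v] by (rule order.trans) (simp add: Z_def ennreal_leI)
  have "emeasure lebesgue {y\<in>{-R..R}. \<tau> < norm (f y)} \<le> 0"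
  proof (rule ennreal_le_epsilon)
    fix e :: real
    assume "e > 0"
    then have L: "(Z + 1) / e > 0" and "Z / ((Z + 1) / e) \<le> e"
      using \<open>Z \<ge> 0\<close> by (simp_all add: field_simps)
    then have "ennreal (Z / ((Z + 1) / e)) \<le> ennreal e"
      by (intro ennreal_leI)
    with emeasure_superlevel_le_of_shift_recurrence[OF decay \<open>b > 0\<close> \<open>C \<ge> 0\<close> \<open>K \<ge> 1\<close> \<open>Z \<ge> 0\<close> L \<open>\<tau> > 0\<close> q Z rel]
    show "emeasure lebesgue {y\<in>{-R..R}. \<tau> < norm (f y)} \<le> 0 + ennreal e"
      by simp
  qed
  then show "emeasure lebesgue {y\<in>{-R..R}. \<tau> < norm (f y)} = 0"
    by simp
qed

lemma AE_zero_of_exp_sum_recurrence: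
  fixes f :: "real \<Rightarrow> complex"
  assumes "f \<in> borel_measurable lebesgue"
    and "\<forall>c>0. ((\<lambda>x. norm (f x) * exp (c * x)) \<longlongrightarrow> 0) at_top"
    and "b > 0" and "C \<ge> 0" and "K \<ge> 1"
    and A: "finite A" "a1 \<in> A" "d a1 \<noteq> 0" "inj_on \<omega> A"
    and "AE y in lebesgue. shift_recurrence (\<lambda>y. norm (exp_sum A d \<omega> 0 y)) f b C K y"
  shows "AE y in lebesgue. f y = 0"
proof (rule AE_zero_of_shift_recurrence[OF assms(1-5) _ _ assms(10)])
  show "(\<lambda>y. norm (exp_sum A d \<omega> 0 y)) \<in> borel_measurable borel"
    using continuous_on_norm_exp_sum[of A d \<omega> 0 0] by (simp add: borel_measurable_continuous_onI)
  show "\<exists>Z. \<forall>v. (\<integral>\<^sup>+y. level_count (norm (exp_sum A d \<omega> 0 (y + v))) * indicator {-R..R} y \<partial>lborel)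
          \<le> ennreal Z" if "R \<ge> 0" for R
    using exp_sum_level_count_integral_bounded[where d = d and a = "-R" and b = R, OF A] that by simp
qed

section \<open>Time-frequency shifts\<close>

lemma AE_lebesgue_translates:
  fixes P :: "real \<Rightarrow> bool" and t :: "nat \<Rightarrow> real"
  assumes "AE x in lebesgue. P x"
  shows "AE y in lebesgue. \<forall>n. P (y + t n)"
  unfolding AE_all_countable
proof
  fix n
  have "AE x in lborel. P x"
    using assms by (simp add: AE_completion_iff)
  then obtain N where N: "{x. \<not> P x} \<subseteq> N" "N \<in> sets borel" "emeasure lborel N = 0"
    by (rule AE_E) auto
  have "AE x in lborel. x \<notin> N"
    using N by (intro AE_not_in) (auto simp: null_sets_def)
  then have "AE x in lborel. t n + 1 * x \<notin> N"
    using N(2) by (intro AE_borel_affine) auto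
  then have "AE x in lborel. P (x + t n)"
    by (rule AE_mp) (use N(1) in \<open>auto simp: add.commute\<close>)
  then show "AE y in lebesgue. P (y + t n)"
    by (rule AE_completion)
qed

lemma norm_MT: "norm (MT a t f x) = norm (f (x - t))"
  unfolding MT_def by (simp add: norm_mult norm_exp_eq_Re)

lemma sum_MT_same_shift:
  fixes A :: "(real \<times> real) set" and c :: "real \<times> real \<Rightarrow> complex" and f :: "real \<Rightarrow> complex"
  assumes "\<And>p. p \<in> A \<Longrightarrow> snd p = t"
  shows "(\<Sum>p\<in>A. c p * MT (fst p) (snd p) f (z + t))
           = exp_sum A (\<lambda>p. c p * exp (\<i> * complex_of_real (2 * pi * fst p * t))) (\<lambda>p. 2 * pi * fst p) 0 z * f z"
proof -
  have MT_eq: "c p * MT (fst p) t f (z + t)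
      = c p * exp (\<i> * complex_of_real (2 * pi * fst p * t)) * exp (\<i> * (2 * pi * fst p) * z) * f z" for p
  proof -
    have "2 * pi * \<i> * complex_of_real (fst p) * (z + t)
        = \<i> * complex_of_real (2 * pi * fst p * t) + \<i> * complex_of_real (2 * pi * fst p) * z"
      by (simp add: algebra_simps)
    then show ?thesis
      unfolding MT_def by (simp add: exp_add)
  qed
  show ?thesis
    unfolding exp_sum_def sum_distrib_right by (intro sum.cong refl) (simp add: assms MT_eq mult.assoc)
qed

lemma lattice_gap_index:
  fixes T :: "real set"
  assumes "b > 0" and "finite T" and lattice: "T \<subseteq> {t. \<exists>k::int. t = b * of_int k}"
    and "s \<in> T" and "s \<noteq> Max T"
  shows "\<exists>i < nat \<lceil>(Max T - Min T) / b\<rceil>. Max T - s = real (Suc i) * b"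
proof -
  have "Max T \<in> T" and "s < Max T" and "Min T \<le> s"
    using assms(2,4,5) by (auto intro: Max_in Min_le simp: order.strict_iff_order)
  moreover obtain k l :: int where "s = b * of_int k" and "Max T = b * of_int l"
    using lattice \<open>s \<in> T\<close> \<open>Max T \<in> T\<close> by blast
  ultimately have "k < l"
    using \<open>b > 0\<close> by (simp add: mult_less_cancel_left_pos)
  define i where "i = nat (l - k - 1)"
  have "real (Suc i) = of_int l - of_int k"
    unfolding i_def using \<open>k < l\<close> by simp
  moreover have "Max T - s = (of_int l - of_int k) * b"
    using \<open>s = b * of_int k\<close> \<open>Max T = b * of_int l\<close> by (simp add: algebra_simps)
  ultimately have "Max T - s = real (Suc i) * b"
    by simp
  moreover have "real (Suc i) \<le> (Max T - Min T) / b"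
    using \<open>Min T \<le> s\<close> \<open>b > 0\<close> \<open>Max T - s = real (Suc i) * b\<close> by (simp add: field_simps)
  then have "i < nat \<lceil>(Max T - Min T) / b\<rceil>"
    by linarith
  ultimately show ?thesis by blast
qed

lemma norm_top_shift_le:
  fixes S :: "(real \<times> real) set" and c :: "real \<times> real \<Rightarrow> complex" and f :: "real \<Rightarrow> complex"
  assumes "finite S" and "K \<ge> 1"
    and gap: "\<And>p. p \<in> S \<Longrightarrow> snd p \<noteq> t \<Longrightarrow> \<exists>i<K. t - snd p = real (Suc i) * b"
    and zero: "(\<Sum>p\<in>S. c p * MT (fst p) (snd p) f (z + t)) = 0"
  shows "norm (exp_sum {p\<in>S. snd p = t} (\<lambda>p. c p * exp (\<i> * complex_of_real (2 * pi * fst p * t)))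
                 (\<lambda>p. 2 * pi * fst p) 0 z) * norm (f z)
           \<le> (\<Sum>p\<in>S. norm (c p)) * Max ((\<lambda>i. norm (f (z + real (Suc i) * b))) ` {..<K})"
    (is "norm (exp_sum ?A ?d ?\<omega> 0 z) * _ \<le> _ * ?W")
proof -
  have window: "finite ((\<lambda>i. norm (f (z + real (Suc i) * b))) ` {..<K})"
    "(\<lambda>i. norm (f (z + real (Suc i) * b))) ` {..<K} \<noteq> {}"
    using \<open>K \<ge> 1\<close> by (auto simp: lessThan_empty_iff)
  have "norm (f (z + real (Suc 0) * b)) \<le> ?W"
    using window \<open>K \<ge> 1\<close> by (intro Max_ge rev_image_eqI[of 0]) auto
  then have "?W \<ge> 0"
    using norm_ge_zero order.trans by blast
  have "0 = (\<Sum>p\<in>S. c p * MT (fst p) (snd p) f (z + t))"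
    by (rule zero[symmetric])
  also have "\<dots> = (\<Sum>p\<in>S - ?A. c p * MT (fst p) (snd p) f (z + t)) + (\<Sum>p\<in>?A. c p * MT (fst p) (snd p) f (z + t))"
    using \<open>finite S\<close> by (intro sum.subset_diff) auto
  also have "(\<Sum>p\<in>?A. c p * MT (fst p) (snd p) f (z + t)) = exp_sum ?A ?d ?\<omega> 0 z * f z"
    by (rule sum_MT_same_shift) simp
  finally have "exp_sum ?A ?d ?\<omega> 0 z * f z = - (\<Sum>p\<in>S - ?A. c p * MT (fst p) (snd p) f (z + t))"
    unfolding add_eq_0_iff[symmetric] by (rule sym)
  then have "norm (exp_sum ?A ?d ?\<omega> 0 z) * norm (f z) = norm (\<Sum>p\<in>S - ?A. c p * MT (fst p) (snd p) f (z + t))"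
    by (simp flip: norm_mult)
  also have "\<dots> \<le> (\<Sum>p\<in>S - ?A. norm (c p) * norm (f (z + t - snd p)))"
    by (rule order.trans[OF norm_sum]) (simp add: norm_mult norm_MT)
  also have "\<dots> \<le> (\<Sum>p\<in>S - ?A. norm (c p) * ?W)"
  proof (intro sum_mono mult_left_mono)
    fix p assume "p \<in> S - ?A"
    then obtain i where "i < K" "t - snd p = real (Suc i) * b"
      using gap[of p] by auto
    then have shift: "z + t - snd p = z + real (Suc i) * b"
      by simp
    show "norm (f (z + t - snd p)) \<le> ?W"
      unfolding shift using window \<open>i < K\<close> by (intro Max_ge) auto
  qed simp
  also have "\<dots> \<le> (\<Sum>p\<in>S. norm (c p)) * ?W"
    unfolding sum_distrib_right[symmetric] using \<open>finite S\<close> \<open>?W \<ge> 0\<close>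
    by (intro mult_right_mono sum_mono2) auto
  finally show ?thesis .
qed

lemma vanishing_gabor_sum_shift_recurrence:
  fixes f :: "real \<Rightarrow> complex" and S :: "(real \<times> real) set" and c :: "real \<times> real \<Rightarrow> complex"
  assumes "b > 0" and "finite S" and lattice: "S \<subseteq> UNIV \<times> {t. \<exists>k::int. t = b * of_int k}"
    and "\<exists>p\<in>S. c p \<noteq> 0"
    and vanish: "AE x in lebesgue. (\<Sum>p\<in>S. c p * MT (fst p) (snd p) f x) = 0"
  obtains A :: "(real \<times> real) set" and d \<omega> a1 C K
  where "finite A" and "a1 \<in> A" and "d a1 \<noteq> 0" and "inj_on \<omega> A" and "C \<ge> 0" and "K \<ge> 1"
    and "AE y in lebesgue. shift_recurrence (\<lambda>y. norm (exp_sum A d \<omega> 0 y)) f b C K y"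
proof -
  define S' where "S' = {p\<in>S. c p \<noteq> 0}"
  have "finite S'" and "S' \<noteq> {}"
    unfolding S'_def using assms(2,4) by auto
  define t where "t = Max (snd ` S')"
  have "t \<in> snd ` S'"
    unfolding t_def using \<open>finite S'\<close> \<open>S' \<noteq> {}\<close> by (intro Max_in) auto
  then obtain a1 where "a1 \<in> S'" and "snd a1 = t" by auto
  define A where "A = {p\<in>S'. snd p = t}"
  define d where "d p = c p * exp (\<i> * complex_of_real (2 * pi * fst p * t))" for p
  define \<omega> where "\<omega> p = 2 * pi * fst p" for p :: "real \<times> real"
  define K where "K = Suc (nat \<lceil>(t - Min (snd ` S')) / b\<rceil>)"
  have "K \<ge> 1" unfolding K_def by simp
  have gap: "\<exists>i<K. t - snd p = real (Suc i) * b" if "p \<in> S'" "snd p \<noteq> t" for p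
  proof -
    have "snd ` S' \<subseteq> {t. \<exists>k::int. t = b * of_int k}"
      using lattice unfolding S'_def by auto
    from lattice_gap_index[OF \<open>b > 0\<close> _ this, of "snd p"] that \<open>finite S'\<close>
    show ?thesis
      unfolding K_def t_def by (auto intro: less_SucI)
  qed
  have "(\<Sum>p\<in>S. c p * MT (fst p) (snd p) f x) = (\<Sum>p\<in>S'. c p * MT (fst p) (snd p) f x)" for x
    unfolding S'_def using \<open>finite S\<close> by (intro sum.mono_neutral_right) auto
  with vanish have "AE x in lebesgue. (\<Sum>p\<in>S'. c p * MT (fst p) (snd p) f x) = 0"
    by simp
  from AE_lebesgue_translates[OF this, of "\<lambda>n. real n * b + t"]
  have recurrence: "AE y in lebesgue. shift_recurrence (\<lambda>y. norm (exp_sum A d \<omega> 0 y)) f b (\<Sum>p\<in>S'. norm (c p)) K y"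
  proof eventually_elim
    case (elim y)
    show ?case
      unfolding shift_recurrence_def
    proof
      fix n :: nat
      have shift: "(\<lambda>i. norm (f (y + real n * b + real (Suc i) * b)))
          = (\<lambda>i. norm (f (y + real (Suc n + i) * b)))"
        by (simp add: algebra_simps)
      from norm_top_shift_le[OF \<open>finite S'\<close> \<open>K \<ge> 1\<close> gap, where c = c and f = f and z = "y + real n * b"] elim
      show "norm (exp_sum A d \<omega> 0 (y + real n * b)) * norm (f (y + real n * b))
          \<le> (\<Sum>p\<in>S'. norm (c p)) * Max ((\<lambda>i. norm (f (y + real (Suc n + i) * b))) ` {..<K})"
        unfolding A_def d_def \<omega>_def shift by (simp add: add.assoc)
    qed
  qed
  show thesis
  proof (rule that[OF _ _ _ _ _ \<open>K \<ge> 1\<close> recurrence])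
    show "finite A" "a1 \<in> A"
      unfolding A_def using \<open>finite S'\<close> \<open>a1 \<in> S'\<close> \<open>snd a1 = t\<close> by simp_all
    show "d a1 \<noteq> 0"
      using \<open>a1 \<in> S'\<close> unfolding d_def S'_def by simp
    show "inj_on \<omega> A"
      unfolding inj_on_def \<omega>_def A_def by (auto intro: prod_eqI)
  qed (simp add: sum_nonneg)
qed

theorem theorem3p3:
  fixes f :: "real \<Rightarrow> complex"
  assumes "f \<in> borel_measurable lebesgue"
    and "\<not> (AE x in lebesgue. f x = 0)"
    and "\<forall>c>0. ((\<lambda>x. norm (f x) * exp (c * x)) \<longlongrightarrow> 0) at_top"
  shows "\<forall>b>0. gabor_lin_indep f b"
proof (intro allI impI)
  fix b :: real
  assume "b > 0"
  show "gabor_lin_indep f b"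
    unfolding gabor_lin_indep_def
  proof (intro allI impI notI, elim conjE)
    fix S and c :: "real \<times> real \<Rightarrow> complex"
    assume "finite S" "S \<subseteq> UNIV \<times> {t. \<exists>k::int. t = b * of_int k}" "\<exists>p\<in>S. c p \<noteq> 0"
      and "AE x in lebesgue. (\<Sum>p\<in>S. c p * MT (fst p) (snd p) f x) = 0"
    then obtain A :: "(real \<times> real) set" and d \<omega> a1 C K
      where "finite A" "a1 \<in> A" "d a1 \<noteq> 0" "inj_on \<omega> A" "C \<ge> 0" "K \<ge> 1"
        and "AE y in lebesgue. shift_recurrence (\<lambda>y. norm (exp_sum A d \<omega> 0 y)) f b C K y"
      by (rule vanishing_gabor_sum_shift_recurrence[OF \<open>b > 0\<close>])
    then have "AE y in lebesgue. f y = 0"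
      using assms(1,3) \<open>b > 0\<close> by (intro AE_zero_of_exp_sum_recurrence) auto
    with assms(2) show False
      by simp
  qed
qed

end
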